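(* For every graph $G$ and every independent set $I$ in $G$ we have $\mu_\alpha(G-N[I])\leq\mu_\alpha(G)$.
   Context: All graphs are finite and simple; the null graph is allowed. $N[I]$ is the closed neighborhood of $I$ (the vertices of $I$ together with all their neighbors), and $G-N[I]$ is obtained by deleting these vertices. For a graph $H$, $\alpha(H)$ is the maximum size of an independent set, $i(H)$ the minimum size of an inclusion-maximal independent set (both $0$ for the null graph), and $\mu_\alpha(H)=\alpha(H)-i(H)$. *)

theory Defs
  imports Main
begin

definition graph :: "'a set \<Rightarrow> 'a set set \<Rightarrow> bool" where
  "graph V E \<longleftrightarrow> finite V \<and> (\<forall>e\<in>E. e \<subseteq> V \<and> card e = 2)"

definition independent :: "'a set \<Rightarrow> 'a set set \<Rightarrow> 'a set \<Rightarrow> bool" where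
  "independent V E S \<longleftrightarrow> S \<subseteq> V \<and> (\<forall>u\<in>S. \<forall>v\<in>S. {u, v} \<notin> E)"

definition maximal_independent :: "'a set \<Rightarrow> 'a set set \<Rightarrow> 'a set \<Rightarrow> bool" where
  "maximal_independent V E S \<longleftrightarrow> independent V E S \<and>
     (\<forall>T. independent V E T \<and> S \<subseteq> T \<longrightarrow> T = S)"

text \<open>alpha: maximum size of an independent set; i: minimum size of an
  inclusion-maximal independent set (both 0 for the null graph).\<close>

definition alpha :: "'a set \<Rightarrow> 'a set set \<Rightarrow> nat" where
  "alpha V E = Max (card ` {S. independent V E S})"

definition indep_dom :: "'a set \<Rightarrow> 'a set set \<Rightarrow> nat" where
  "indep_dom V E = Min (card ` {S. maximal_independent V E S})"

definition mu_alpha :: "'a set \<Rightarrow> 'a set set \<Rightarrow> int" where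
  "mu_alpha V E = int (alpha V E) - int (indep_dom V E)"

definition closed_nbhd :: "'a set \<Rightarrow> 'a set set \<Rightarrow> 'a set \<Rightarrow> 'a set" where
  "closed_nbhd V E I = I \<union> {v\<in>V. \<exists>u\<in>I. {u, v} \<in> E}"

definition induced_edges :: "'a set set \<Rightarrow> 'a set \<Rightarrow> 'a set set" where
  "induced_edges E W = {e\<in>E. e \<subseteq> W}"

end

theory Submission
  imports Defs
begin

text \<open>Every independent set of \<open>G - N[I]\<close> extends by \<open>I\<close> to an independent set of \<open>G\<close>, since no
  vertex outside \<open>N[I]\<close> is adjacent to \<open>I\<close>; hence \<open>\<alpha>(G - N[I]) + |I| \<le> \<alpha>(G)\<close>. Likewise a
  maximal independent set \<open>T\<close> of \<open>G - N[I]\<close> gives the maximal independent set \<open>T \<union> I\<close> of \<open>G\<close>: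
  vertices of \<open>N[I] - I\<close> are dominated by \<open>I\<close> and the remaining ones by \<open>T\<close>. So
  \<open>i(G) \<le> i(G - N[I]) + |I|\<close>, and subtracting the two inequalities gives the claim.\<close>

lemma independent_subset_vertices: "independent V E S \<Longrightarrow> S \<subseteq> V"
  by (simp add: independent_def)

lemma finite_independent_sets: "finite V \<Longrightarrow> finite {S. independent V E S}"
  by (rule finite_subset[of _ "Pow V"]) (auto simp: independent_def)

lemma card_le_alpha: "finite V \<Longrightarrow> independent V E S \<Longrightarrow> card S \<le> alpha V E"
  unfolding alpha_def by (rule Max_ge) (auto simp: finite_independent_sets)

lemma alpha_attained: "finite V \<Longrightarrow> \<exists>S. independent V E S \<and> card S = alpha V E"
proof -
  assume "finite V"
  moreover have "independent V E {}"
    by (simp add: independent_def)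
  ultimately have "alpha V E \<in> card ` {S. independent V E S}"
    unfolding alpha_def by (intro Max_in) (auto simp: finite_independent_sets)
  then show ?thesis by auto
qed

lemma maximal_independent_exists: "finite V \<Longrightarrow> \<exists>S. maximal_independent V E S"
proof -
  assume fin: "finite V"
  obtain S where S: "independent V E S" "card S = alpha V E"
    using alpha_attained[OF fin] by blast
  have "maximal_independent V E S"
    unfolding maximal_independent_def
  proof (intro conjI allI impI)
    fix T assume T: "independent V E T \<and> S \<subseteq> T"
    then have "finite T"
      using fin by (meson finite_subset independent_subset_vertices)
    moreover have "card T \<le> card S"
      using card_le_alpha[OF fin] T S by auto
    ultimately show "T = S"
      using T card_subset_eq by (metis card_mono le_antisym)
  qed (fact S(1))
  then show ?thesis by blast
qed

lemma indep_dom_le_card: "finite V \<Longrightarrow> maximal_independent V E S \<Longrightarrow> indep_dom V E \<le> card S"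
  unfolding indep_dom_def maximal_independent_def
  by (rule Min_le) (auto intro: finite_subset[OF _ finite_independent_sets])

lemma indep_dom_attained: "finite V \<Longrightarrow> \<exists>S. maximal_independent V E S \<and> card S = indep_dom V E"
proof -
  assume fin: "finite V"
  have "finite {S. maximal_independent V E S}"
    using fin by (auto simp: maximal_independent_def intro: finite_subset[OF _ finite_independent_sets])
  then have "indep_dom V E \<in> card ` {S. maximal_independent V E S}"
    unfolding indep_dom_def using maximal_independent_exists[OF fin] by (intro Min_in) auto
  then show ?thesis by auto
qed

lemma graph_no_loop: "graph V E \<Longrightarrow> {v} \<notin> E"
  by (auto simp: graph_def)

lemma graph_induced_edges: "graph V E \<Longrightarrow> W \<subseteq> V \<Longrightarrow> graph W (induced_edges E W)"
  by (auto simp: graph_def induced_edges_def intro: finite_subset)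

text \<open>Without the loop-freeness supplied by \<^const>\<open>graph\<close>, a vertex with a loop and no
  neighbour in \<open>S\<close> would be undominated although it cannot be added to \<open>S\<close>.\<close>

lemma maximal_independent_iff_dominating:
  assumes "graph V E"
  shows "maximal_independent V E S \<longleftrightarrow>
           independent V E S \<and> (\<forall>v\<in>V - S. \<exists>u\<in>S. {u, v} \<in> E)"
proof
  assume max: "maximal_independent V E S"
  show "independent V E S \<and> (\<forall>v\<in>V - S. \<exists>u\<in>S. {u, v} \<in> E)"
  proof (intro conjI ballI)
    show ind: "independent V E S"
      using max by (simp add: maximal_independent_def)
    fix v assume v: "v \<in> V - S"
    show "\<exists>u\<in>S. {u, v} \<in> E"
    proof (rule ccontr)
      assume "\<not> (\<exists>u\<in>S. {u, v} \<in> E)"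
      then have "independent V E (insert v S)"
        using ind v graph_no_loop[OF assms] by (auto simp: independent_def insert_commute)
      then show False
        using max v by (auto simp: maximal_independent_def)
    qed
  qed
next
  assume "independent V E S \<and> (\<forall>v\<in>V - S. \<exists>u\<in>S. {u, v} \<in> E)"
  then show "maximal_independent V E S"
    unfolding maximal_independent_def independent_def by blast
qed

context
  fixes V :: "'a set" and E :: "'a set set" and I :: "'a set"
  assumes I_independent: "independent V E I"
begin

lemma independent_Un_outside_closed_nbhd:
  assumes "independent (V - closed_nbhd V E I) (induced_edges E (V - closed_nbhd V E I)) S"
  shows "independent V E (S \<union> I)"
proof -
  have S: "S \<subseteq> V - closed_nbhd V E I" "\<forall>u\<in>S. \<forall>v\<in>S. {u, v} \<notin> E"
    using assms by (auto simp: independent_def induced_edges_def)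
  have "{u, v} \<notin> E" if "u \<in> I" "v \<in> S" for u v
    using that S(1) by (auto simp: closed_nbhd_def)
  then show ?thesis
    using S I_independent unfolding independent_def
    by (metis UnE Un_subset_iff Diff_subset insert_commute subset_trans)
qed

lemma maximal_independent_Un_outside_closed_nbhd:
  assumes G: "graph V E"
    and T: "maximal_independent (V - closed_nbhd V E I) (induced_edges E (V - closed_nbhd V E I)) T"
  shows "maximal_independent V E (T \<union> I)"
proof -
  let ?W = "V - closed_nbhd V E I"
  have GW: "graph ?W (induced_edges E ?W)"
    using graph_induced_edges[OF G] by blast
  note T' = T[unfolded maximal_independent_iff_dominating[OF GW]]
  have "\<exists>u\<in>T \<union> I. {u, v} \<in> E" if v: "v \<in> V - (T \<union> I)" for v
  proof (cases "v \<in> closed_nbhd V E I")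
    case True
    then show ?thesis using v by (auto simp: closed_nbhd_def)
  next
    case False
    then show ?thesis using v T' by (auto simp: induced_edges_def)
  qed
  then show ?thesis
    unfolding maximal_independent_iff_dominating[OF G]
    using independent_Un_outside_closed_nbhd T' by blast
qed

lemma card_Un_outside_closed_nbhd:
  assumes "finite V" and "S \<subseteq> V - closed_nbhd V E I"
  shows "card (S \<union> I) = card S + card I"
proof (rule card_Un_disjoint)
  show "finite S" "finite I"
    using assms I_independent by (auto simp: independent_def intro: finite_subset)
  show "S \<inter> I = {}"
    using assms(2) by (auto simp: closed_nbhd_def)
qed

lemma alpha_outside_closed_nbhd:
  assumes "finite V"
  shows "alpha (V - closed_nbhd V E I) (induced_edges E (V - closed_nbhd V E I)) + card I
           \<le> alpha V E"
proof -
  obtain S where S: "independent (V - closed_nbhd V E I) (induced_edges E (V - closed_nbhd V E I)) S"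
    and card_S: "card S = alpha (V - closed_nbhd V E I) (induced_edges E (V - closed_nbhd V E I))"
    using alpha_attained assms by blast
  have "card (S \<union> I) \<le> alpha V E"
    using card_le_alpha[OF assms independent_Un_outside_closed_nbhd[OF S]] .
  then show ?thesis
    using card_Un_outside_closed_nbhd[OF assms independent_subset_vertices[OF S]] card_S by simp
qed

lemma indep_dom_outside_closed_nbhd:
  assumes G: "graph V E"
  shows "indep_dom V E
           \<le> indep_dom (V - closed_nbhd V E I) (induced_edges E (V - closed_nbhd V E I)) + card I"
proof -
  have fin: "finite V"
    using G by (simp add: graph_def)
  obtain T where T: "maximal_independent (V - closed_nbhd V E I) (induced_edges E (V - closed_nbhd V E I)) T"
    and card_T: "card T = indep_dom (V - closed_nbhd V E I) (induced_edges E (V - closed_nbhd V E I))"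
    using indep_dom_attained fin by blast
  have "T \<subseteq> V - closed_nbhd V E I"
    using T by (auto simp: maximal_independent_def independent_def)
  then show ?thesis
    using indep_dom_le_card[OF fin maximal_independent_Un_outside_closed_nbhd[OF G T]]
      card_Un_outside_closed_nbhd[OF fin] card_T by simp
qed

end

theorem lemma4:
  fixes V :: "'a set" and E :: "'a set set" and I :: "'a set"
  assumes "graph V E"
    and "independent V E I"
  shows "mu_alpha (V - closed_nbhd V E I) (induced_edges E (V - closed_nbhd V E I))
           \<le> mu_alpha V E"
proof -
  have "finite V"
    using assms(1) by (simp add: graph_def)
  then show ?thesis
    using alpha_outside_closed_nbhd[OF assms(2)] indep_dom_outside_closed_nbhd[OF assms(2,1)]
    unfolding mu_alpha_def by linarith
qed

end
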